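(* Let $\mathscr{a}\in\mathbb{R}$, $\mathscr{b}\in(\mathscr{a},\infty)$, $\rho\in(0,\infty)$, $f\in C([\mathscr{a},\mathscr{b}],\mathbb{R})$, for $\theta=(\theta_1,\theta_2,\theta_3,\theta_4)\in\mathbb{R}^4$ and $x\in\mathbb{R}$ let $\mathscr{N}^\theta(x)=\theta_3\max\{\theta_1x+\theta_2,0\}+\theta_4$ and $\mathcal{L}(\theta)=\rho\int_{\mathscr{a}}^{\mathscr{b}}(\mathscr{N}^\theta(y)-f(y))^2\,\mathrm{d}y$, let $m=\rho\int_{\mathscr{a}}^{\mathscr{b}}\big(f(x)-(\mathscr{b}-\mathscr{a})^{-1}\int_{\mathscr{a}}^{\mathscr{b}}f(y)\,\mathrm{d}y\big)^2\,\mathrm{d}x$, and let $\theta\in\mathbb{R}^4$ satisfy $\mathcal{L}(\theta)<m$. Then $\max\{\theta_1\mathscr{a}+\theta_2,\ \theta_1\mathscr{b}+\theta_2\}>0$. *)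

theory Defs
  imports "HOL-Analysis.Analysis"
begin

definition relu_net :: "real \<Rightarrow> real \<Rightarrow> real \<Rightarrow> real \<Rightarrow> real \<Rightarrow> real" where
  "relu_net t1 t2 t3 t4 x = t3 * max (t1 * x + t2) 0 + t4"

definition risk :: "real \<Rightarrow> real \<Rightarrow> real \<Rightarrow> (real \<Rightarrow> real) \<Rightarrow> real \<Rightarrow> real \<Rightarrow> real \<Rightarrow> real \<Rightarrow> real" where
  "risk a b \<rho> f t1 t2 t3 t4 = \<rho> * integral {a..b} (\<lambda>y. (relu_net t1 t2 t3 t4 y - f y)^2)"

definition risk_const :: "real \<Rightarrow> real \<Rightarrow> real \<Rightarrow> (real \<Rightarrow> real) \<Rightarrow> real" where
  "risk_const a b \<rho> f = \<rho> * integral {a..b} (\<lambda>x. (f x - (1 / (b - a)) * integral {a..b} f)^2)"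

end

theory Submission
  imports Defs
begin

text \<open>If the hidden neuron is inactive on all of [a, b], the network is the constant t4 there, and
  among all constants the mean of f has the least squared L2 distance to f. Hence the risk is at
  least the risk of the best constant approximation.\<close>

lemma integral_sq_dev_eq_mean_dev_plus:
  fixes f :: "real \<Rightarrow> real" and a b c :: real
  assumes "a < b" and "continuous_on {a..b} f"
  defines "\<mu> \<equiv> (1 / (b - a)) * integral {a..b} f"
  shows "integral {a..b} (\<lambda>x. (f x - c)^2)
           = integral {a..b} (\<lambda>x. (f x - \<mu>)^2) + (b - a) * (\<mu> - c)^2"
proof -
  have const: "((\<lambda>x. k) has_integral k * (b - a)) {a..b}" for k
    using has_integral_const_real[of k a b] assms(1) by (simp add: mult.commute)
  have sq_int: "(\<lambda>x. (f x - \<mu>)^2) integrable_on {a..b}"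
    using assms(2) by (intro integrable_continuous_interval continuous_intros)
  have "((\<lambda>x. f x - \<mu>) has_integral integral {a..b} f - \<mu> * (b - a)) {a..b}"
    by (intro has_integral_diff integrable_integral integrable_continuous_interval assms(2) const)
  then have dev_zero: "((\<lambda>x. f x - \<mu>) has_integral 0) {a..b}"
    using assms(1) by (simp add: \<mu>_def)
  have "((\<lambda>x. (f x - \<mu>)^2 + 2 * (\<mu> - c) * (f x - \<mu>) + (\<mu> - c)^2) has_integral
          integral {a..b} (\<lambda>x. (f x - \<mu>)^2) + 2 * (\<mu> - c) * 0 + (\<mu> - c)^2 * (b - a)) {a..b}"
    by (intro has_integral_add integrable_integral sq_int has_integral_mult_right dev_zero const)
  moreover have "(\<lambda>x. (f x - \<mu>)^2 + 2 * (\<mu> - c) * (f x - \<mu>) + (\<mu> - c)^2) = (\<lambda>x. (f x - c)^2)"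
    by (auto simp: power2_eq_square algebra_simps)
  ultimately show ?thesis
    by (simp add: integral_unique mult.commute)
qed

lemma integral_sq_dev_mean_le:
  fixes f :: "real \<Rightarrow> real" and a b c :: real
  assumes "a < b" and "continuous_on {a..b} f"
  shows "integral {a..b} (\<lambda>x. (f x - (1 / (b - a)) * integral {a..b} f)^2)
           \<le> integral {a..b} (\<lambda>x. (f x - c)^2)"
  using integral_sq_dev_eq_mean_dev_plus[OF assms, of c] assms(1) by simp

lemma affine_nonpos_on_interval:
  fixes t1 t2 a b y :: real
  assumes "t1 * a + t2 \<le> 0" and "t1 * b + t2 \<le> 0" and "y \<in> {a..b}"
  shows "t1 * y + t2 \<le> 0"
proof (cases "t1 \<ge> 0")
  case True
  then have "t1 * y \<le> t1 * b" using assms(3) by (simp add: mult_left_mono)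
  then show ?thesis using assms(2) by linarith
next
  case False
  then have "t1 * y \<le> t1 * a" using assms(3) by (simp add: mult_left_mono_neg)
  then show ?thesis using assms(1) by linarith
qed

lemma relu_net_inactive:
  assumes "t1 * x + t2 \<le> 0"
  shows "relu_net t1 t2 t3 t4 x = t4"
  using assms by (simp add: relu_net_def max_def)

lemma risk_ge_risk_const_if_inactive:
  fixes a b \<rho> :: real and f :: "real \<Rightarrow> real" and t1 t2 t3 t4 :: real
  assumes "a < b" and "0 \<le> \<rho>" and "continuous_on {a..b} f"
    and "\<And>y. y \<in> {a..b} \<Longrightarrow> t1 * y + t2 \<le> 0"
  shows "risk_const a b \<rho> f \<le> risk a b \<rho> f t1 t2 t3 t4"
proof -
  have "integral {a..b} (\<lambda>y. (relu_net t1 t2 t3 t4 y - f y)^2) = integral {a..b} (\<lambda>y. (f y - t4)^2)"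
    using assms(4) by (intro integral_cong) (simp add: relu_net_inactive power2_commute)
  then show ?thesis
    unfolding risk_def risk_const_def
    using integral_sq_dev_mean_le[OF assms(1,3), of t4] assms(2) by (simp add: mult_left_mono)
qed

theorem lemma5p7:
  fixes a b \<rho> :: real and f :: "real \<Rightarrow> real" and t1 t2 t3 t4 :: real
  assumes "a < b" and "0 < \<rho>" and "continuous_on {a..b} f"
    and "risk a b \<rho> f t1 t2 t3 t4 < risk_const a b \<rho> f"
  shows "max (t1 * a + t2) (t1 * b + t2) > 0"
proof (rule ccontr)
  assume "\<not> ?thesis"
  then have "t1 * y + t2 \<le> 0" if "y \<in> {a..b}" for y
    using affine_nonpos_on_interval[OF _ _ that] by fastforce
  then have "risk_const a b \<rho> f \<le> risk a b \<rho> f t1 t2 t3 t4"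
    using assms(1-3) by (intro risk_ge_risk_const_if_inactive) auto
  then show False using assms(4) by linarith
qed

end
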